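(* The map $P:\mu^{-1}(0)^{rss}\to\{(x_1,\dots,x_n,y_1,\dots,y_n)\in\mathbb{C}^{2n}: x_\iota\ne x_\gamma\text{ for }\iota\ne\gamma\}$, $(r,s,i,j)\mapsto(r_{11},\dots,r_{nn},s'_{11},\dots,s'_{nn})$ with $s'_{\iota\iota}=\operatorname{tr}(L^\iota(r)s)$, is a well-defined regular, $B$-invariant, surjective map that separates orbit closures (points of $\mu^{-1}(0)^{rss}$ whose $B$-orbit closures in $\mu^{-1}(0)^{rss}$ are disjoint have distinct images).
   Context: $B\subset GL_n(\mathbb{C})$ is the group of invertible upper triangular matrices, $\mathfrak{b}$ the upper triangular matrices, $\mathfrak{n}^+$ the strictly upper triangular matrices, $\mathfrak{b}^*=\mathfrak{gl}_n/\mathfrak{n}^+$, $(\mathbb{C}^n)^*$ row vectors. $B$ acts on $T^*(\mathfrak{b}\times\mathbb{C}^n)=\mathfrak{b}\times\mathfrak{b}^*\times\mathbb{C}^n\times(\mathbb{C}^n)^*$ by $b\cdot(r,s,i,j)=(brb^{-1},bsb^{-1},bi,jb^{-1})$, with moment map $\mu(r,s,i,j)=[r,s]+ij \bmod\mathfrak{n}^+\in\mathfrak{b}^*$. $\mu^{-1}(0)^{rss}$ is the set of $(r,s,i,j)\in\mu^{-1}(0)$ such that $r$ has pairwise distinct eigenvalues (diagonal entries). For such $r$ put $l_k(r)=r-r_{kk}I$ and $L^\iota(r)=\big[\operatorname{tr}\prod_{k\ne\iota}l_k(r)\big]^{-1}\prod_{k\ne\iota}l_k(r)$, an upper triangular matrix;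 $\operatorname{tr}(L^\iota(r)s)$ is well defined for $s\in\mathfrak{gl}_n/\mathfrak{n}^+$. *)

theory Defs
  imports Complex_Main "Jordan_Normal_Form.Matrix"
begin

text \<open>Points of T*(b x C^n) are quadruples (r,s,i,j) of complex matrices:
 r upper triangular n x n, s a lower triangular n x n matrix representing its class
 in gl_n / n^+ (canonical representative), i a column n x 1, j a row 1 x n.\<close>

type_synonym pt = "complex mat \<times> complex mat \<times> complex mat \<times> complex mat"

definition mtrace :: "complex mat \<Rightarrow> complex" where
  "mtrace A = (\<Sum>k<dim_row A. A $$ (k,k))"

definition lower_part :: "nat \<Rightarrow> complex mat \<Rightarrow> complex mat" where
  "lower_part n A = mat n n (\<lambda>(a,b). if b \<le> a then A $$ (a,b) else 0)"

definition ambient :: "nat \<Rightarrow> pt set" where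
  "ambient n = {(r,s,i,j). r \<in> carrier_mat n n \<and> upper_triangular r
      \<and> s \<in> carrier_mat n n \<and> (\<forall>a<n. \<forall>b<n. a < b \<longrightarrow> s $$ (a,b) = 0)
      \<and> i \<in> carrier_mat n 1 \<and> j \<in> carrier_mat 1 n}"

text \<open>moment map [r,s] + ij modulo n^+ (as lower triangular representative)\<close>
definition moment :: "nat \<Rightarrow> pt \<Rightarrow> complex mat" where
  "moment n x = (case x of (r,s,i,j) \<Rightarrow> lower_part n (r * s - s * r + i * j))"

definition mu0_rss :: "nat \<Rightarrow> pt set" where
  "mu0_rss n = {x \<in> ambient n. moment n x = 0\<^sub>m n n \<and>
      (case x of (r,s,i,j) \<Rightarrow> (\<forall>a<n. \<forall>b<n. a \<noteq> b \<longrightarrow> r $$ (a,a) \<noteq> r $$ (b,b)))}"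

definition Borel :: "nat \<Rightarrow> complex mat set" where
  "Borel n = {b \<in> carrier_mat n n. upper_triangular b \<and> invertible_mat b}"

definition act :: "nat \<Rightarrow> complex mat \<Rightarrow> complex mat \<Rightarrow> pt \<Rightarrow> pt" where
  "act n b binv x = (case x of (r,s,i,j) \<Rightarrow>
      (b * r * binv, lower_part n (b * s * binv), b * i, j * binv))"

definition orbit :: "nat \<Rightarrow> pt \<Rightarrow> pt set" where
  "orbit n x = {act n b binv x | b binv. b \<in> Borel n \<and> binv \<in> carrier_mat n n
       \<and> b * binv = 1\<^sub>m n}"

inductive_set poly_fun :: "nat \<Rightarrow> (pt \<Rightarrow> complex) set" for n where
  const: "(\<lambda>_. c) \<in> poly_fun n"
| coord_r: "a < n \<Longrightarrow> b < n \<Longrightarrow> (\<lambda>(r,s,i,j). r $$ (a,b)) \<in> poly_fun n"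
| coord_s: "a < n \<Longrightarrow> b < n \<Longrightarrow> (\<lambda>(r,s,i,j). s $$ (a,b)) \<in> poly_fun n"
| coord_i: "a < n \<Longrightarrow> (\<lambda>(r,s,i,j). i $$ (a,0)) \<in> poly_fun n"
| coord_j: "b < n \<Longrightarrow> (\<lambda>(r,s,i,j). j $$ (0,b)) \<in> poly_fun n"
| add: "f \<in> poly_fun n \<Longrightarrow> g \<in> poly_fun n \<Longrightarrow> (\<lambda>x. f x + g x) \<in> poly_fun n"
| mult: "f \<in> poly_fun n \<Longrightarrow> g \<in> poly_fun n \<Longrightarrow> (\<lambda>x. f x * g x) \<in> poly_fun n"

text \<open>regular function on the (principal open subset of an affine variety) X:
  globally a quotient of polynomials with denominator nonvanishing on X\<close>
definition regular_on :: "nat \<Rightarrow> pt set \<Rightarrow> (pt \<Rightarrow> complex) \<Rightarrow> bool" where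
  "regular_on n X f \<longleftrightarrow> (\<exists>p\<in>poly_fun n. \<exists>q\<in>poly_fun n.
      \<forall>x\<in>X. q x \<noteq> 0 \<and> f x = p x / q x)"

definition zclosure_in :: "nat \<Rightarrow> pt set \<Rightarrow> pt set \<Rightarrow> pt set" where
  "zclosure_in n X S = {x \<in> X. \<forall>p\<in>poly_fun n. (\<forall>y\<in>S. p y = 0) \<longrightarrow> p x = 0}"

definition lfac :: "nat \<Rightarrow> complex mat \<Rightarrow> nat \<Rightarrow> complex mat" where
  "lfac n r k = r - r $$ (k,k) \<cdot>\<^sub>m 1\<^sub>m n"

definition prod_l :: "nat \<Rightarrow> complex mat \<Rightarrow> nat \<Rightarrow> complex mat" where
  "prod_l n r \<iota> = foldr (\<lambda>k M. lfac n r k * M) (filter (\<lambda>k. k \<noteq> \<iota>) [0..<n]) (1\<^sub>m n)"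

definition Lmat :: "nat \<Rightarrow> complex mat \<Rightarrow> nat \<Rightarrow> complex mat" where
  "Lmat n r \<iota> = inverse (mtrace (prod_l n r \<iota>)) \<cdot>\<^sub>m prod_l n r \<iota>"

definition Pmap :: "nat \<Rightarrow> pt \<Rightarrow> complex list \<times> complex list" where
  "Pmap n x = (case x of (r,s,i,j) \<Rightarrow>
     (map (\<lambda>k. r $$ (k,k)) [0..<n], map (\<lambda>k. mtrace (Lmat n r k * s)) [0..<n]))"

definition target :: "nat \<Rightarrow> (complex list \<times> complex list) set" where
  "target n = {(xs,ys). length xs = n \<and> length ys = n \<and> distinct xs}"

end

theory Submission
  imports Defs "Jordan_Normal_Form.Determinant"
begin

text \<open>
  The product \<open>\<Prod>\<^sub>k\<^sub>\<noteq>\<^sub>\<iota> l\<^sub>k(r)\<close> has \<open>\<iota>\<close>-th diagonal entry \<open>\<Prod>\<^sub>k\<^sub>\<noteq>\<^sub>\<iota> (r\<^sub>\<iota>\<^sub>\<iota> - r\<^sub>k\<^sub>k) \<noteq> 0\<close> and all other diagonal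
  entries zero, so its trace is nonzero; by Cayley--Hamilton for triangular matrices,
  \<open>l\<^sub>\<iota>(r) \<Prod>\<^sub>k\<^sub>\<noteq>\<^sub>\<iota> l\<^sub>k(r) = 0\<close>, so the columns of \<open>L\<^sup>\<iota>(r)\<close> are \<open>r\<^sub>\<iota>\<^sub>\<iota>\<close>-eigenvectors. Conjugation by \<open>b \<in> B\<close>
  fixes the diagonal of \<open>r\<close> and conjugates \<open>L\<^sup>\<iota>(r)\<close>, and pairing with the upper triangular \<open>L\<^sup>\<iota>\<close> only
  sees the class of \<open>s\<close> in \<open>\<mathfrak>gl\<^sub>n/\<mathfrak>n\<^sup>+\<close>; hence \<open>P\<close> is \<open>B\<close>-invariant, and it is visibly a quotient of
  polynomials.

  The \<open>\<iota>\<close>-th columns of the \<open>L\<^sup>\<iota>(r)\<close> form a unitriangular \<open>V \<in> B\<close> with \<open>V\<^sup>-\<^sup>1 r V\<close> diagonal, so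
  every orbit meets the locus where \<open>r\<close> is diagonal. There the moment map equation reads
  \<open>(r\<^sub>a\<^sub>a - r\<^sub>b\<^sub>b) s\<^sub>a\<^sub>b + i\<^sub>a j\<^sub>b = 0\<close> for \<open>b \<le> a\<close>, so a suitable one-parameter subgroup of the torus
  multiplies \<open>i\<close> and \<open>j\<close> by \<open>t\<close> and the strictly lower part of \<open>s\<close> by \<open>t\<^sup>2\<close>. Letting \<open>t \<rightarrow> 0\<close>, the
  point \<open>(diag r, diag s, 0, 0)\<close>, which depends only on \<open>P(x)\<close>, lies in the Zariski closure of the
  orbit of \<open>x\<close>. So points with equal images have intersecting orbit closures, and these
  diagonal points also show that \<open>P\<close> is surjective.
\<close>

lemma index_mult_mat_sum:
  "A \<in> carrier_mat n m \<Longrightarrow> B \<in> carrier_mat m k \<Longrightarrow> a < n \<Longrightarrow> b < k \<Longrightarrow>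
   (A * B) $$ (a,b) = (\<Sum>c<m. A $$ (a,c) * B $$ (c,b))"
  by (auto simp: scalar_prod_def lessThan_atLeast0 intro!: sum.cong)

lemma sum_lessThan_single:
  "a < (m :: nat) \<Longrightarrow> (\<And>c. c < m \<Longrightarrow> c \<noteq> a \<Longrightarrow> f c = 0) \<Longrightarrow> (\<Sum>c<m. f c) = (f a :: 'a :: comm_monoid_add)"
  by (subst sum.remove[of _ a]) (auto intro!: sum.neutral)

lemma conj_mult:
  fixes b binv X Y :: "'a :: semiring_1 mat"
  assumes b: "b \<in> carrier_mat n n" and bi: "binv \<in> carrier_mat n n" and bib: "binv * b = 1\<^sub>m n"
    and X: "X \<in> carrier_mat n n" and Y: "Y \<in> carrier_mat n n"
  shows "(b * X * binv) * (b * Y * binv) = b * (X * Y) * binv"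
proof -
  have "binv * (b * Z) = Z" if "Z \<in> carrier_mat n n" for Z
    using b bi bib that by (simp flip: assoc_mult_mat[OF bi b that])
  then show ?thesis
    using b bi X Y by (simp add: assoc_mult_mat[of _ n n _ n _ n] mult_carrier_mat[of _ n n _ n])
qed

lemma conj_add_minus:
  fixes b binv X Y Z :: "'a :: comm_ring_1 mat"
  assumes b: "b \<in> carrier_mat n n" and bi: "binv \<in> carrier_mat n n"
    and X: "X \<in> carrier_mat n n" and Y: "Y \<in> carrier_mat n n" and Z: "Z \<in> carrier_mat n n"
  shows "b * (X - Y + Z) * binv = b * X * binv - b * Y * binv + b * Z * binv"
proof -
  have bX: "b * X \<in> carrier_mat n n" and bY: "b * Y \<in> carrier_mat n n" and bZ: "b * Z \<in> carrier_mat n n"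
    using b X Y Z by auto
  have "b * (X - Y + Z) = b * X - b * Y + b * Z"
    unfolding mult_add_distrib_mat[OF b minus_carrier_mat[OF Y] Z] mult_minus_distrib_mat[OF b X Y] ..
  also have "(b * X - b * Y + b * Z) * binv = b * X * binv - b * Y * binv + b * Z * binv"
    unfolding add_mult_distrib_mat[OF minus_carrier_mat[OF bY] bZ bi] minus_mult_distrib_mat[OF bX bY bi] ..
  finally show ?thesis .
qed

lemma conj_commutator_add_mult:
  fixes b binv r s i j :: "'a :: comm_ring_1 mat"
  assumes b: "b \<in> carrier_mat n n" and bi: "binv \<in> carrier_mat n n" and bib: "binv * b = 1\<^sub>m n"
    and r: "r \<in> carrier_mat n n" and s: "s \<in> carrier_mat n n" and i: "i \<in> carrier_mat n 1"
    and j: "j \<in> carrier_mat 1 n"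
  shows "(b * r * binv) * (b * s * binv) - (b * s * binv) * (b * r * binv) + (b * i) * (j * binv)
    = b * (r * s - s * r + i * j) * binv"
proof -
  have "(b * i) * (j * binv) = b * (i * (j * binv))" by (rule assoc_mult_mat[OF b i]) (use j bi in auto)
  also have "i * (j * binv) = i * j * binv" by (rule assoc_mult_mat[OF i j bi, symmetric])
  also have "b * (i * j * binv) = b * (i * j) * binv"
    by (rule assoc_mult_mat[OF b _ bi, symmetric]) (use i j in auto)
  finally have ij: "(b * i) * (j * binv) = b * (i * j) * binv" .
  show ?thesis
    unfolding conj_mult[OF b bi bib r s] conj_mult[OF b bi bib s r] ij
    by (rule conj_add_minus[OF b bi, symmetric]) (use r s i j in auto)
qed

definition upper_tri_mats :: "nat \<Rightarrow> 'a :: zero mat set" where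
  "upper_tri_mats n = {A \<in> carrier_mat n n. upper_triangular A}"

lemma upper_tri_matsI:
  "A \<in> carrier_mat n n \<Longrightarrow> (\<And>a b. a < n \<Longrightarrow> b < a \<Longrightarrow> A $$ (a,b) = 0) \<Longrightarrow> A \<in> upper_tri_mats n"
  unfolding upper_tri_mats_def by auto

lemma upper_tri_matsD:
  assumes "A \<in> upper_tri_mats n"
  shows "A \<in> carrier_mat n n" "\<And>a b. a < n \<Longrightarrow> b < a \<Longrightarrow> A $$ (a,b) = 0"
  using assms unfolding upper_tri_mats_def by auto

lemma upper_tri_mats_mult:
  fixes A B :: "'a :: comm_semiring_0 mat"
  assumes A: "A \<in> upper_tri_mats n" and B: "B \<in> upper_tri_mats n"
  shows "A * B \<in> upper_tri_mats n"
proof (rule upper_tri_matsI)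
  note Ac = upper_tri_matsD(1)[OF A] and Bc = upper_tri_matsD(1)[OF B]
  show "A * B \<in> carrier_mat n n" using Ac Bc by simp
  fix a b assume ab: "a < n" "b < a"
  have "A $$ (a,c) * B $$ (c,b) = 0" if "c < n" for c
    using upper_tri_matsD(2)[OF A, of a c] upper_tri_matsD(2)[OF B, of c b] that ab
    by (cases "c < a") auto
  then show "(A * B) $$ (a,b) = 0" using ab by (simp add: index_mult_mat_sum[OF Ac Bc])
qed

lemma upper_tri_mult_diag:
  fixes A B :: "'a :: comm_semiring_0 mat"
  assumes A: "A \<in> upper_tri_mats n" and B: "B \<in> upper_tri_mats n" and a: "a < n"
  shows "(A * B) $$ (a,a) = A $$ (a,a) * B $$ (a,a)"
proof -
  note Ac = upper_tri_matsD(1)[OF A] and Bc = upper_tri_matsD(1)[OF B]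
  have "A $$ (a,c) * B $$ (c,a) = 0" if "c < n" "c \<noteq> a" for c
    using upper_tri_matsD(2)[OF A, of a c] upper_tri_matsD(2)[OF B, of c a] that a
    by (cases "c < a") auto
  then show ?thesis
    by (simp add: index_mult_mat_sum[OF Ac Bc a a] sum_lessThan_single[OF a])
qed

lemma upper_tri_mats_smult: "(A :: 'a :: semiring_0 mat) \<in> upper_tri_mats n \<Longrightarrow> c \<cdot>\<^sub>m A \<in> upper_tri_mats n"
  unfolding upper_tri_mats_def upper_triangular_def by auto

lemma dim_mat_diag[simp]: "dim_row (mat_diag n f) = n" "dim_col (mat_diag n f) = n"
  unfolding mat_diag_def by auto

lemma mat_diag_upper_tri: "mat_diag n f \<in> upper_tri_mats n"
  unfolding upper_tri_mats_def upper_triangular_def mat_diag_def by auto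

lemma det_upper_tri:
  fixes A :: "'a :: comm_ring_1 mat"
  shows "A \<in> upper_tri_mats n \<Longrightarrow> det A = (\<Prod>a<n. A $$ (a,a))"
  unfolding upper_tri_mats_def
  by (auto simp: det_upper_triangular[of _ n] prod_list_diag_prod atLeast0LessThan)

text \<open>Solving \<open>A * W = 1\<close> row by row from the bottom shows that \<open>W\<close> is upper triangular.\<close>
lemma upper_tri_right_inverse:
  fixes A W :: "'a :: idom mat"
  assumes A: "A \<in> upper_tri_mats n" and W: "W \<in> carrier_mat n n" and AW: "A * W = 1\<^sub>m n"
  shows "W \<in> upper_tri_mats n" "\<And>a. a < n \<Longrightarrow> A $$ (a,a) \<noteq> 0"
proof -
  note Ac = upper_tri_matsD(1)[OF A]
  have "det A * det W = 1" using det_mult[OF Ac W] AW by simp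
  then have "det A \<noteq> 0" by auto
  then show diag: "\<And>a. a < n \<Longrightarrow> A $$ (a,a) \<noteq> 0" by (auto simp: det_upper_tri[OF A])
  have "\<forall>b<a. W $$ (a,b) = 0" if "a < n" for a
    using that
  proof (induct "n - a" arbitrary: a rule: less_induct)
    case (less a)
    show ?case
    proof (intro allI impI)
      fix b assume b: "b < a"
      have zero: "A $$ (a,c) * W $$ (c,b) = 0" if "c < n" "c \<noteq> a" for c
        using upper_tri_matsD(2)[OF A, of a c] less(1)[of c] less(2) that b by (cases "c < a") auto
      have "0 = (A * W) $$ (a,b)" using AW less b by simp
      also have "\<dots> = A $$ (a,a) * W $$ (a,b)"
        using zero less b by (simp add: index_mult_mat_sum[OF Ac W] sum_lessThan_single[OF less(2)])
      finally show "W $$ (a,b) = 0" using diag[OF less(2)] by simp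
    qed
  qed
  then show "W \<in> upper_tri_mats n" using W by (auto intro: upper_tri_matsI)
qed

lemma upper_tri_conj_diag:
  fixes b binv r :: "'a :: comm_ring_1 mat"
  assumes b: "b \<in> upper_tri_mats n" and bi: "binv \<in> upper_tri_mats n" and r: "r \<in> upper_tri_mats n"
    and bbi: "b * binv = 1\<^sub>m n" and a: "a < n"
  shows "(b * r * binv) $$ (a,a) = r $$ (a,a)"
proof -
  have "(b * r * binv) $$ (a,a) = r $$ (a,a) * (b $$ (a,a) * binv $$ (a,a))"
    using upper_tri_mult_diag[OF upper_tri_mats_mult[OF b r] bi a] upper_tri_mult_diag[OF b r a]
    by (simp add: ac_simps)
  also have "b $$ (a,a) * binv $$ (a,a) = 1"
    using upper_tri_mult_diag[OF b bi a] bbi a by simp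
  finally show ?thesis by simp
qed

section \<open>The quotient \<open>\<mathfrak>gl\<^sub>n/\<mathfrak>n\<^sup>+\<close> and the trace pairing\<close>

lemma lower_part_carrier[simp]: "lower_part n M \<in> carrier_mat n n"
  and lower_part_dim[simp]: "dim_row (lower_part n M) = n" "dim_col (lower_part n M) = n"
  unfolding lower_part_def by auto

lemma lower_part_index[simp]:
  "a < n \<Longrightarrow> b < n \<Longrightarrow> lower_part n M $$ (a,b) = (if b \<le> a then M $$ (a,b) else 0)"
  unfolding lower_part_def by auto

lemma lower_part_eqI:
  "(\<And>a b. a < n \<Longrightarrow> b \<le> a \<Longrightarrow> X $$ (a,b) = Y $$ (a,b)) \<Longrightarrow> lower_part n X = lower_part n Y"
  by (rule eq_matI) auto

lemma lower_part_idem: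
  "M \<in> carrier_mat n n \<Longrightarrow> (\<And>a b. a < b \<Longrightarrow> b < n \<Longrightarrow> M $$ (a,b) = 0) \<Longrightarrow> lower_part n M = M"
  by (rule eq_matI) auto

lemma lower_part_eq_self_iff:
  assumes "M \<in> carrier_mat n n"
  shows "lower_part n M = M \<longleftrightarrow> (\<forall>a<n. \<forall>b<n. a < b \<longrightarrow> M $$ (a,b) = 0)"
proof
  assume "lower_part n M = M"
  then show "\<forall>a<n. \<forall>b<n. a < b \<longrightarrow> M $$ (a,b) = 0"
    by (metis lower_part_index not_less)
qed (use assms in \<open>auto intro: lower_part_idem\<close>)

lemma upper_tri_mult_lower_part_index:
  assumes U: "U \<in> upper_tri_mats n" and M: "M \<in> carrier_mat n n" and ab: "a < n" "b \<le> a"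
  shows "(U * lower_part n M) $$ (a,b) = (U * M) $$ (a,b)"
proof -
  note Uc = upper_tri_matsD(1)[OF U]
  have "(U * lower_part n M) $$ (a,b) = (\<Sum>c<n. U $$ (a,c) * lower_part n M $$ (c,b))"
    using ab by (intro index_mult_mat_sum[OF Uc lower_part_carrier]) auto
  also have "\<dots> = (\<Sum>c<n. U $$ (a,c) * M $$ (c,b))"
    using upper_tri_matsD(2)[OF U, of a] ab by (intro sum.cong) auto
  also have "\<dots> = (U * M) $$ (a,b)"
    using ab by (intro index_mult_mat_sum[OF Uc M, symmetric]) auto
  finally show ?thesis .
qed

lemma lower_part_mult_upper_tri_index:
  assumes U: "U \<in> upper_tri_mats n" and M: "M \<in> carrier_mat n n" and ab: "a < n" "b \<le> a"
  shows "(lower_part n M * U) $$ (a,b) = (M * U) $$ (a,b)"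
proof -
  note Uc = upper_tri_matsD(1)[OF U]
  have "(lower_part n M * U) $$ (a,b) = (\<Sum>c<n. lower_part n M $$ (a,c) * U $$ (c,b))"
    using ab by (intro index_mult_mat_sum[OF lower_part_carrier Uc]) auto
  also have "\<dots> = (\<Sum>c<n. M $$ (a,c) * U $$ (c,b))"
    using upper_tri_matsD(2)[OF U, of _ b] ab by (intro sum.cong) auto
  also have "\<dots> = (M * U) $$ (a,b)"
    using ab by (intro index_mult_mat_sum[OF M Uc, symmetric]) auto
  finally show ?thesis .
qed

lemma lower_part_upper_tri_mult:
  "U \<in> upper_tri_mats n \<Longrightarrow> M \<in> carrier_mat n n \<Longrightarrow> lower_part n (U * lower_part n M) = lower_part n (U * M)"
  by (intro lower_part_eqI upper_tri_mult_lower_part_index)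

lemma lower_part_mult_upper_tri:
  "U \<in> upper_tri_mats n \<Longrightarrow> M \<in> carrier_mat n n \<Longrightarrow> lower_part n (lower_part n M * U) = lower_part n (M * U)"
  by (intro lower_part_eqI lower_part_mult_upper_tri_index)

lemma lower_part_add_minus:
  "X \<in> carrier_mat n n \<Longrightarrow> Y \<in> carrier_mat n n \<Longrightarrow> Z \<in> carrier_mat n n \<Longrightarrow>
   lower_part n (X - Y + Z) = lower_part n X - lower_part n Y + lower_part n Z"
  by (rule eq_matI) auto

lemma lower_part_commutator:
  assumes r: "r \<in> upper_tri_mats n" and S: "S \<in> carrier_mat n n" and C: "C \<in> carrier_mat n n"
  shows "lower_part n (r * lower_part n S - lower_part n S * r + C) = lower_part n (r * S - S * r + C)"
proof -
  note rc = upper_tri_matsD(1)[OF r]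
  have "lower_part n (r * lower_part n S - lower_part n S * r + C)
      = lower_part n (r * lower_part n S) - lower_part n (lower_part n S * r) + lower_part n C"
    by (rule lower_part_add_minus) (use rc C mult_carrier_mat[OF lower_part_carrier rc] in auto)
  also have "\<dots> = lower_part n (r * S) - lower_part n (S * r) + lower_part n C"
    unfolding lower_part_upper_tri_mult[OF r S] lower_part_mult_upper_tri[OF r S] ..
  also have "\<dots> = lower_part n (r * S - S * r + C)"
    by (rule lower_part_add_minus[symmetric]) (use rc S C in auto)
  finally show ?thesis .
qed

text \<open>Conjugation by upper triangular matrices preserves \<open>\<mathfrak>n\<^sup>+\<close>, so it acts on \<open>\<mathfrak>gl\<^sub>n/\<mathfrak>n\<^sup>+\<close>.\<close>
lemma lower_part_conj:
  assumes U: "U \<in> upper_tri_mats n" and V: "V \<in> upper_tri_mats n" and M: "M \<in> carrier_mat n n"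
  shows "lower_part n (U * lower_part n M * V) = lower_part n (U * M * V)"
proof -
  have UM: "U * lower_part n M \<in> carrier_mat n n" "U * M \<in> carrier_mat n n"
    using upper_tri_matsD(1)[OF U] M by auto
  show ?thesis
    unfolding lower_part_mult_upper_tri[OF V UM(1), symmetric] lower_part_mult_upper_tri[OF V UM(2), symmetric]
      lower_part_upper_tri_mult[OF U M] ..
qed

lemma mtrace_eq_sum: "A \<in> carrier_mat n n \<Longrightarrow> mtrace A = (\<Sum>a<n. A $$ (a,a))"
  unfolding mtrace_def by auto

lemma mtrace_smult: "A \<in> carrier_mat n n \<Longrightarrow> mtrace (c \<cdot>\<^sub>m A) = c * mtrace A"
  unfolding mtrace_def by (auto simp: sum_distrib_left intro!: sum.cong)

lemma mtrace_mult_comm: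
  assumes A: "A \<in> carrier_mat n m" and B: "B \<in> carrier_mat m n"
  shows "mtrace (A * B) = mtrace (B * A)"
proof -
  have "mtrace (A * B) = (\<Sum>a<n. \<Sum>c<m. A $$ (a,c) * B $$ (c,a))"
    using A B by (simp only: mtrace_eq_sum[of _ n] mult_carrier_mat)
      (intro sum.cong refl index_mult_mat_sum[OF A B], auto)
  also have "\<dots> = (\<Sum>c<m. \<Sum>a<n. B $$ (c,a) * A $$ (a,c))"
    by (subst sum.swap) (simp add: mult.commute)
  also have "\<dots> = mtrace (B * A)"
    using A B by (simp only: mtrace_eq_sum[of _ m] mult_carrier_mat)
      (intro sum.cong refl index_mult_mat_sum[OF B A, symmetric], auto)
  finally show ?thesis .
qed

lemma mtrace_conj:
  assumes b: "b \<in> carrier_mat n n" and bi: "binv \<in> carrier_mat n n" and M: "M \<in> carrier_mat n n"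
    and bib: "binv * b = 1\<^sub>m n"
  shows "mtrace (b * M * binv) = mtrace M"
proof -
  have "mtrace (b * M * binv) = mtrace (binv * (b * M))"
    using b bi M by (intro mtrace_mult_comm) auto
  also have "binv * (b * M) = M"
    using b bi M bib by (simp flip: assoc_mult_mat[OF bi b M])
  finally show ?thesis .
qed

text \<open>Pairing an upper triangular matrix with \<open>M\<close> only sees the lower triangular part of \<open>M\<close>:
  this is why \<open>tr (L\<^sup>\<iota>(r) s)\<close> is well defined on \<open>\<mathfrak>gl\<^sub>n/\<mathfrak>n\<^sup>+\<close>.\<close>
lemma mtrace_mult_lower_part:
  assumes U: "U \<in> upper_tri_mats n" and M: "M \<in> carrier_mat n n"
  shows "mtrace (U * lower_part n M) = mtrace (U * M)"
  using upper_tri_matsD(1)[OF U] M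
  by (simp only: mtrace_eq_sum[of _ n] mult_carrier_mat lower_part_carrier)
    (intro sum.cong refl upper_tri_mult_lower_part_index[OF U M], auto)

section \<open>The \<open>B\<close>-action on \<open>\<mu>\<^sup>-\<^sup>1(0)\<^sup>r\<^sup>s\<^sup>s\<close>\<close>

definition distinct_diag :: "nat \<Rightarrow> 'a mat \<Rightarrow> bool" where
  "distinct_diag n r \<longleftrightarrow> (\<forall>a<n. \<forall>b<n. a \<noteq> b \<longrightarrow> r $$ (a,a) \<noteq> r $$ (b,b))"

lemma mem_ambient_iff:
  "(r,s,i,j) \<in> ambient n \<longleftrightarrow> r \<in> upper_tri_mats n \<and> s \<in> carrier_mat n n \<and> lower_part n s = s
     \<and> i \<in> carrier_mat n 1 \<and> j \<in> carrier_mat 1 n"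
  unfolding ambient_def upper_tri_mats_def by (auto simp: lower_part_eq_self_iff)

lemma mem_mu0_rss_iff:
  "(r,s,i,j) \<in> mu0_rss n \<longleftrightarrow> (r,s,i,j) \<in> ambient n \<and> lower_part n (r * s - s * r + i * j) = 0\<^sub>m n n
     \<and> distinct_diag n r"
  unfolding mu0_rss_def moment_def distinct_diag_def by auto

definition Borel_pair :: "nat \<Rightarrow> 'a :: comm_ring_1 mat \<Rightarrow> 'a mat \<Rightarrow> bool" where
  "Borel_pair n b binv \<longleftrightarrow> b \<in> upper_tri_mats n \<and> binv \<in> upper_tri_mats n
     \<and> b * binv = 1\<^sub>m n \<and> binv * b = 1\<^sub>m n"

lemma Borel_pairD:
  assumes "Borel_pair n b binv"
  shows "b \<in> upper_tri_mats n" "binv \<in> upper_tri_mats n" "b \<in> carrier_mat n n" "binv \<in> carrier_mat n n"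
    "b * binv = 1\<^sub>m n" "binv * b = 1\<^sub>m n"
  using assms unfolding Borel_pair_def upper_tri_mats_def by auto

lemma Borel_pair_sym: "Borel_pair n b binv \<Longrightarrow> Borel_pair n binv b"
  unfolding Borel_pair_def by auto

lemma Borel_pairI:
  fixes b binv :: "'a :: field mat"
  assumes "b \<in> upper_tri_mats n" "binv \<in> carrier_mat n n" "b * binv = 1\<^sub>m n"
  shows "Borel_pair n b binv"
  using assms upper_tri_right_inverse(1)[OF assms] upper_tri_matsD(1)[OF assms(1)]
  unfolding Borel_pair_def by (auto intro: mat_mult_left_right_inverse)

lemma Borel_pair_iff:
  "b \<in> Borel n \<and> binv \<in> carrier_mat n n \<and> b * binv = 1\<^sub>m n \<longleftrightarrow> Borel_pair n b binv"
proof
  assume "b \<in> Borel n \<and> binv \<in> carrier_mat n n \<and> b * binv = 1\<^sub>m n"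
  then show "Borel_pair n b binv" by (intro Borel_pairI) (auto simp: Borel_def upper_tri_mats_def)
next
  assume "Borel_pair n b binv"
  note B = Borel_pairD[OF this]
  then have "invertible_mat b"
    unfolding invertible_mat_def inverts_mat_def by (auto intro!: exI[of _ binv])
  then show "b \<in> Borel n \<and> binv \<in> carrier_mat n n \<and> b * binv = 1\<^sub>m n"
    using B unfolding Borel_def upper_tri_mats_def by auto
qed

lemma Borel_pair_mult:
  assumes T: "Borel_pair n T Ti" and W: "Borel_pair n W V"
  shows "Borel_pair n (T * W) (V * Ti)"
proof -
  note T' = Borel_pairD[OF T] and W' = Borel_pairD[OF W]
  have "(T * W) * (V * Ti) = T * (W * V) * Ti" "(V * Ti) * (T * W) = V * (Ti * T) * W"
    using T'(3,4) W'(3,4) by (simp_all add: assoc_mult_mat[of _ n n _ n _ n] mult_carrier_mat[of _ n n _ n])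
  then show ?thesis
    using T' W' unfolding Borel_pair_def by (auto intro: upper_tri_mats_mult)
qed

lemma mat_diag_Borel_pair:
  fixes f :: "nat \<Rightarrow> 'a :: field"
  assumes "\<And>k. k < n \<Longrightarrow> f k \<noteq> 0"
  shows "Borel_pair n (mat_diag n f) (mat_diag n (\<lambda>k. inverse (f k)))"
proof -
  have "mat_diag n (\<lambda>k. f k * inverse (f k)) = 1\<^sub>m n" "mat_diag n (\<lambda>k. inverse (f k) * f k) = 1\<^sub>m n"
    using assms by (auto simp: mat_diag_def intro!: eq_matI)
  then show ?thesis unfolding Borel_pair_def by (simp add: mat_diag_upper_tri)
qed

lemma act_eq[simp]:
  "act n b binv (r,s,i,j) = (b * r * binv, lower_part n (b * s * binv), b * i, j * binv)"
  unfolding act_def by simp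

lemma moment_eq[simp]: "moment n (r,s,i,j) = lower_part n (r * s - s * r + i * j)"
  unfolding moment_def by simp

lemma orbit_Borel_pair: "orbit n x = {act n b binv x | b binv. Borel_pair n b binv}"
  unfolding orbit_def Borel_pair_iff ..

lemma act_act:
  assumes x: "x \<in> ambient n" and T: "Borel_pair n T Ti" and W: "Borel_pair n W V"
  shows "act n T Ti (act n W V x) = act n (T * W) (V * Ti) x"
proof -
  obtain r s i j where xe: "x = (r,s,i,j)" by (cases x)
  note T' = Borel_pairD[OF T] and W' = Borel_pairD[OF W]
  have r: "r \<in> carrier_mat n n" and s: "s \<in> carrier_mat n n" and i: "i \<in> carrier_mat n 1"
    and j: "j \<in> carrier_mat 1 n"
    using x upper_tri_matsD(1) unfolding xe mem_ambient_iff by auto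
  have "T * (W * M * V) * Ti = T * W * M * (V * Ti)" if "M \<in> carrier_mat n n" for M
    using T'(3,4) W'(3,4) that
    by (simp add: assoc_mult_mat[of _ n n _ n _ n] mult_carrier_mat[of _ n n _ n])
  moreover have "lower_part n (T * lower_part n (W * s * V) * Ti) = lower_part n (T * (W * s * V) * Ti)"
    using W'(3,4) s by (intro lower_part_conj[OF T'(1,2)]) auto
  moreover have "T * (W * i) = T * W * i" "j * V * Ti = j * (V * Ti)"
    using T'(3,4) W'(3,4) i j by simp_all
  ultimately show ?thesis using r s unfolding xe by simp
qed

lemma orbit_trans:
  assumes x: "x \<in> ambient n" and y: "y \<in> orbit n x" and z: "z \<in> orbit n y"
  shows "z \<in> orbit n x"
proof -
  obtain W V where W: "Borel_pair n W V" and ye: "y = act n W V x"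
    using y unfolding orbit_Borel_pair by blast
  obtain T Ti where T: "Borel_pair n T Ti" and ze: "z = act n T Ti y"
    using z unfolding orbit_Borel_pair by blast
  show ?thesis
    unfolding orbit_Borel_pair ze ye act_act[OF x T W] using Borel_pair_mult[OF T W] by blast
qed

lemma moment_act:
  assumes x: "(r,s,i,j) \<in> ambient n" and B: "Borel_pair n b binv"
  shows "moment n (act n b binv (r,s,i,j)) = lower_part n (b * moment n (r,s,i,j) * binv)"
proof -
  note B' = Borel_pairD[OF B]
  have r: "r \<in> upper_tri_mats n" and rc: "r \<in> carrier_mat n n" and s: "s \<in> carrier_mat n n"
    and i: "i \<in> carrier_mat n 1" and j: "j \<in> carrier_mat 1 n"
    using x upper_tri_matsD(1) unfolding mem_ambient_iff by auto
  let ?r = "b * r * binv" and ?s = "b * s * binv"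
  have "moment n (act n b binv (r,s,i,j))
      = lower_part n (?r * lower_part n ?s - lower_part n ?s * ?r + (b * i) * (j * binv))"
    by simp
  also have "\<dots> = lower_part n (?r * ?s - ?s * ?r + (b * i) * (j * binv))"
    by (rule lower_part_commutator[OF upper_tri_mats_mult[OF upper_tri_mats_mult[OF B'(1) r] B'(2)]])
      (use B'(3,4) s i j in auto)
  also have "\<dots> = lower_part n (b * (r * s - s * r + i * j) * binv)"
    unfolding conj_commutator_add_mult[OF B'(3,4,6) rc s i j] ..
  also have "\<dots> = lower_part n (b * moment n (r,s,i,j) * binv)"
    using rc s i j unfolding moment_eq by (intro lower_part_conj[OF B'(1,2), symmetric]) auto
  finally show ?thesis .
qed

lemma act_mem_mu0_rss:
  assumes x: "x \<in> mu0_rss n" and B: "Borel_pair n b binv"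
  shows "act n b binv x \<in> mu0_rss n"
proof -
  obtain r s i j where xe: "x = (r,s,i,j)" by (cases x)
  note B' = Borel_pairD[OF B]
  have amb: "(r,s,i,j) \<in> ambient n" and m: "moment n (r,s,i,j) = 0\<^sub>m n n" and d: "distinct_diag n r"
    using x unfolding xe mu0_rss_def distinct_diag_def by auto
  have r: "r \<in> upper_tri_mats n" and s: "s \<in> carrier_mat n n" and i: "i \<in> carrier_mat n 1"
    and j: "j \<in> carrier_mat 1 n"
    using amb unfolding mem_ambient_iff by auto
  have diag: "(b * r * binv) $$ (a,a) = r $$ (a,a)" if "a < n" for a
    by (rule upper_tri_conj_diag[OF B'(1,2) r B'(5) that])
  have amb': "act n b binv (r,s,i,j) \<in> ambient n"
    using B' r s i j unfolding act_eq mem_ambient_iff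
    by (auto intro!: upper_tri_mats_mult)
  have "moment n (act n b binv (r,s,i,j)) = 0\<^sub>m n n"
    using B'(3,4) unfolding moment_act[OF amb B] m by (intro eq_matI) auto
  moreover have "distinct_diag n (b * r * binv)" using d diag unfolding distinct_diag_def by auto
  ultimately show ?thesis
    using amb' unfolding xe act_eq mem_mu0_rss_iff moment_eq by blast
qed

section \<open>The matrices \<open>L\<^sup>\<iota>(r)\<close>\<close>

lemma lfac_carrier[simp]: "lfac n r k \<in> carrier_mat n n"
  and lfac_dim[simp]: "dim_row (lfac n r k) = n" "dim_col (lfac n r k) = n"
  unfolding lfac_def by auto

lemma lfac_index:
  "r \<in> carrier_mat n n \<Longrightarrow> a < n \<Longrightarrow> b < n \<Longrightarrow>
   lfac n r k $$ (a,b) = r $$ (a,b) - (if a = b then r $$ (k,k) else 0)"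
  unfolding lfac_def by auto

lemma lfac_upper_tri: "r \<in> upper_tri_mats n \<Longrightarrow> lfac n r k \<in> upper_tri_mats n"
  by (rule upper_tri_matsI) (auto simp: lfac_index upper_tri_matsD)

lemma lfac_mult:
  assumes r: "r \<in> carrier_mat n n" and M: "M \<in> carrier_mat n n"
  shows "lfac n r k * M = r * M - r $$ (k,k) \<cdot>\<^sub>m M"
  unfolding lfac_def using r M
  by (simp add: minus_mult_distrib_mat[OF r smult_carrier_mat[OF one_carrier_mat] M] mult_smult_assoc_mat[of _ n n])

lemma mult_lfac:
  assumes r: "r \<in> carrier_mat n n" and M: "M \<in> carrier_mat n n"
  shows "M * lfac n r k = M * r - r $$ (k,k) \<cdot>\<^sub>m M"
  unfolding lfac_def using r M
  by (simp add: mult_minus_distrib_mat[OF M r smult_carrier_mat[OF one_carrier_mat]]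
      mult_smult_distrib[OF M one_carrier_mat])

lemma lfac_mult_comm:
  "r \<in> carrier_mat n n \<Longrightarrow> M \<in> carrier_mat n n \<Longrightarrow> r * M = M * r \<Longrightarrow> lfac n r k * M = M * lfac n r k"
  by (simp add: lfac_mult mult_lfac)

definition lfac_prod :: "nat \<Rightarrow> complex mat \<Rightarrow> nat list \<Rightarrow> complex mat" where
  "lfac_prod n r ks = foldr (\<lambda>k M. lfac n r k * M) ks (1\<^sub>m n)"

lemma lfac_prod_simps[simp]:
  "lfac_prod n r [] = 1\<^sub>m n" "lfac_prod n r (k # ks) = lfac n r k * lfac_prod n r ks"
  unfolding lfac_prod_def by auto

lemma lfac_prod_carrier[simp]: "lfac_prod n r ks \<in> carrier_mat n n"
  by (induct ks) auto

lemma lfac_prod_dim[simp]: "dim_row (lfac_prod n r ks) = n" "dim_col (lfac_prod n r ks) = n"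
  using lfac_prod_carrier by blast+

lemma prod_l_lfac_prod: "prod_l n r \<iota> = lfac_prod n r (filter (\<lambda>k. k \<noteq> \<iota>) [0..<n])"
  unfolding prod_l_def lfac_prod_def ..

lemma prod_l_carrier[simp]: "prod_l n r \<iota> \<in> carrier_mat n n"
  and prod_l_dim[simp]: "dim_row (prod_l n r \<iota>) = n" "dim_col (prod_l n r \<iota>) = n"
  by (simp_all add: prod_l_lfac_prod)

lemma lfac_prod_append:
  "lfac_prod n r (xs @ ys) = lfac_prod n r xs * lfac_prod n r ys"
proof (induct xs)
  case (Cons x xs)
  then show ?case by (simp add: assoc_mult_mat[of _ n n _ n _ n])
qed simp

lemma lfac_prod_comm: "r \<in> carrier_mat n n \<Longrightarrow> r * lfac_prod n r ks = lfac_prod n r ks * r"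
proof (induct ks)
  case (Cons k ks)
  have "r * (lfac n r k * lfac_prod n r ks) = (r * lfac n r k) * lfac_prod n r ks"
    by (rule assoc_mult_mat[symmetric, OF Cons(2) lfac_carrier lfac_prod_carrier])
  also have "r * lfac n r k = lfac n r k * r" by (rule lfac_mult_comm[OF Cons(2,2) refl, symmetric])
  also have "lfac n r k * r * lfac_prod n r ks = lfac n r k * (lfac_prod n r ks * r)"
    using Cons by (simp add: assoc_mult_mat[OF lfac_carrier Cons(2) lfac_prod_carrier])
  also have "\<dots> = lfac n r k * lfac_prod n r ks * r"
    by (rule assoc_mult_mat[symmetric, OF lfac_carrier lfac_prod_carrier Cons(2)])
  finally show ?case by simp
qed simp

lemma lfac_prod_upper_tri:
  assumes r: "r \<in> upper_tri_mats n"
  shows "lfac_prod n r ks \<in> upper_tri_mats n"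
    "\<And>a. a < n \<Longrightarrow> lfac_prod n r ks $$ (a,a) = (\<Prod>k\<leftarrow>ks. r $$ (a,a) - r $$ (k,k))"
proof -
  have "lfac_prod n r ks \<in> upper_tri_mats n \<and>
    (\<forall>a<n. lfac_prod n r ks $$ (a,a) = (\<Prod>k\<leftarrow>ks. r $$ (a,a) - r $$ (k,k)))"
  proof (induct ks)
    case Nil
    then show ?case by (auto intro: upper_tri_matsI)
  next
    case (Cons k ks)
    then show ?case
      using upper_tri_matsD(1)[OF r]
      by (auto simp del: index_mult_mat simp: upper_tri_mats_mult[OF lfac_upper_tri[OF r]]
          upper_tri_mult_diag[OF lfac_upper_tri[OF r]] lfac_index)
  qed
  then show "lfac_prod n r ks \<in> upper_tri_mats n"
    "\<And>a. a < n \<Longrightarrow> lfac_prod n r ks $$ (a,a) = (\<Prod>k\<leftarrow>ks. r $$ (a,a) - r $$ (k,k))"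
    by auto
qed

text \<open>Cayley--Hamilton for triangular matrices: \<open>l\<^sub>0(r) \<cdots> l\<^sub>m\<^sub>-\<^sub>1(r)\<close> kills the first \<open>m\<close> basis vectors.\<close>
lemma lfac_prod_upt_column_zero:
  assumes r: "r \<in> upper_tri_mats n"
  shows "a < n \<Longrightarrow> b < m \<Longrightarrow> b < n \<Longrightarrow> lfac_prod n r [0..<m] $$ (a,b) = 0"
proof (induct m arbitrary: b)
  case (Suc m)
  note rc = upper_tri_matsD(1)[OF r]
  have "lfac_prod n r [0..<Suc m] = lfac_prod n r [0..<m] * lfac n r m"
    using lfac_prod_append[of n r "[0..<m]" "[m]"] by simp
  moreover have "lfac_prod n r [0..<m] $$ (a,c) * lfac n r m $$ (c,b) = 0" if "c \<in> {..<n}" for c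
  proof (cases "c < m")
    case False
    then have "b < c \<or> b = m \<and> c = m" using Suc.prems by auto
    then show ?thesis using that Suc.prems rc upper_tri_matsD(2)[OF r] by (auto simp: lfac_index)
  qed (use Suc that in auto)
  ultimately show ?case
    using Suc.prems by (simp del: index_mult_mat add: index_mult_mat_sum[of _ n n _ n] sum.neutral)
qed simp

lemma lfac_mult_prod_l:
  assumes r: "r \<in> upper_tri_mats n" and \<iota>: "\<iota> < n"
  shows "lfac n r \<iota> * prod_l n r \<iota> = 0\<^sub>m n n"
proof -
  note rc = upper_tri_matsD(1)[OF r]
  have split: "[0..<n] = [0..<\<iota>] @ \<iota> # [Suc \<iota>..<n]"
    using upt_add_eq_append[of 0 \<iota> "n - \<iota>"] upt_conv_Cons[OF \<iota>] \<iota> by simp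
  have "filter (\<lambda>k. k \<noteq> \<iota>) [0..<n] = [0..<\<iota>] @ [Suc \<iota>..<n]"
    by (subst split) (auto intro!: filter_True)
  then have P: "prod_l n r \<iota> = lfac_prod n r [0..<\<iota>] * lfac_prod n r [Suc \<iota>..<n]"
    by (simp add: prod_l_lfac_prod lfac_prod_append)
  let ?A = "lfac_prod n r [0..<\<iota>]" and ?B = "lfac_prod n r [Suc \<iota>..<n]" and ?l = "lfac n r \<iota>"
  have "?l * (?A * ?B) = (?l * ?A) * ?B" by (rule assoc_mult_mat[symmetric]) auto
  also have "?l * ?A = ?A * ?l" by (rule lfac_mult_comm[OF rc lfac_prod_carrier lfac_prod_comm[OF rc]])
  also have "?A * ?l * ?B = lfac_prod n r [0..<n]"
    unfolding split lfac_prod_append lfac_prod_simps by (rule assoc_mult_mat) auto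
  also have "\<dots> = 0\<^sub>m n n"
    by (rule eq_matI) (auto simp: lfac_prod_upt_column_zero[OF r])
  finally show ?thesis unfolding P .
qed

lemma upper_tri_mult_prod_l:
  assumes r: "r \<in> upper_tri_mats n" and \<iota>: "\<iota> < n"
  shows "r * prod_l n r \<iota> = r $$ (\<iota>,\<iota>) \<cdot>\<^sub>m prod_l n r \<iota>"
proof -
  note rc = upper_tri_matsD(1)[OF r]
  let ?P = "prod_l n r \<iota>" and ?c = "r $$ (\<iota>,\<iota>)"
  have zero: "r * ?P - ?c \<cdot>\<^sub>m ?P = 0\<^sub>m n n"
    using lfac_mult_prod_l[OF r \<iota>] lfac_mult[OF rc prod_l_carrier] by simp
  show ?thesis
  proof (rule eq_matI)
    fix a b assume "a < dim_row (?c \<cdot>\<^sub>m ?P)" "b < dim_col (?c \<cdot>\<^sub>m ?P)"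
    then have ab: "a < n" "b < n" by auto
    have "(r * ?P) $$ (a,b) = (r * ?P - ?c \<cdot>\<^sub>m ?P) $$ (a,b) + (?c \<cdot>\<^sub>m ?P) $$ (a,b)"
      using ab by simp
    then show "(r * ?P) $$ (a,b) = (?c \<cdot>\<^sub>m ?P) $$ (a,b)" unfolding zero using ab by simp
  qed (use rc in auto)
qed

lemma prod_l_upper_tri: "r \<in> upper_tri_mats n \<Longrightarrow> prod_l n r \<iota> \<in> upper_tri_mats n"
  unfolding prod_l_lfac_prod by (rule lfac_prod_upper_tri)

lemma prod_l_diag_eq_0_iff:
  assumes r: "r \<in> upper_tri_mats n" and d: "distinct_diag n r" and \<iota>: "\<iota> < n" and a: "a < n"
  shows "prod_l n r \<iota> $$ (a,a) = 0 \<longleftrightarrow> a \<noteq> \<iota>"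
proof -
  have "prod_l n r \<iota> $$ (a,a) = (\<Prod>k\<leftarrow>filter (\<lambda>k. k \<noteq> \<iota>) [0..<n]. r $$ (a,a) - r $$ (k,k))"
    unfolding prod_l_lfac_prod using lfac_prod_upper_tri(2)[OF r a] .
  then show ?thesis
    using d a \<iota> unfolding distinct_diag_def by (auto simp: prod_list_zero_iff)
qed

lemma mtrace_prod_l:
  assumes r: "r \<in> upper_tri_mats n" and d: "distinct_diag n r" and \<iota>: "\<iota> < n"
  shows "mtrace (prod_l n r \<iota>) = prod_l n r \<iota> $$ (\<iota>,\<iota>)" "mtrace (prod_l n r \<iota>) \<noteq> 0"
proof -
  show e: "mtrace (prod_l n r \<iota>) = prod_l n r \<iota> $$ (\<iota>,\<iota>)"
    unfolding mtrace_eq_sum[OF prod_l_carrier]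
    by (rule sum_lessThan_single[OF \<iota>]) (simp add: prod_l_diag_eq_0_iff[OF r d \<iota>])
  show "mtrace (prod_l n r \<iota>) \<noteq> 0" unfolding e using prod_l_diag_eq_0_iff[OF r d \<iota> \<iota>] by simp
qed

lemma Lmat_carrier[simp]: "Lmat n r \<iota> \<in> carrier_mat n n"
  and Lmat_dim[simp]: "dim_row (Lmat n r \<iota>) = n" "dim_col (Lmat n r \<iota>) = n"
  unfolding Lmat_def by auto

lemma Lmat_upper_tri: "r \<in> upper_tri_mats n \<Longrightarrow> Lmat n r \<iota> \<in> upper_tri_mats n"
  unfolding Lmat_def by (intro upper_tri_mats_smult prod_l_upper_tri)

lemma Lmat_diag:
  assumes r: "r \<in> upper_tri_mats n" and d: "distinct_diag n r" and \<iota>: "\<iota> < n" and a: "a < n"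
  shows "Lmat n r \<iota> $$ (a,a) = (if a = \<iota> then 1 else 0)"
  using a mtrace_prod_l[OF r d \<iota>] prod_l_diag_eq_0_iff[OF r d \<iota> a] unfolding Lmat_def by auto

lemma mtrace_Lmat_mult:
  assumes s: "s \<in> carrier_mat n n"
  shows "mtrace (Lmat n r \<iota> * s) = mtrace (prod_l n r \<iota> * s) / mtrace (prod_l n r \<iota>)"
  unfolding Lmat_def mult_smult_assoc_mat[OF prod_l_carrier s]
    mtrace_smult[OF mult_carrier_mat[OF prod_l_carrier s]]
  by (simp add: divide_inverse mult.commute)

section \<open>Invariance of \<open>P\<close> and diagonalization of \<open>r\<close>\<close>

lemma lfac_conj:
  assumes B: "Borel_pair n b binv" and r: "r \<in> upper_tri_mats n" and k: "k < n"
  shows "lfac n (b * r * binv) k = b * lfac n r k * binv"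
proof -
  note B' = Borel_pairD[OF B] and rc = upper_tri_matsD(1)[OF r]
  let ?c = "r $$ (k,k)"
  have "b * lfac n r k * binv = (b * r - ?c \<cdot>\<^sub>m b) * binv"
    using B'(3) rc unfolding lfac_def
    by (simp add: mult_minus_distrib_mat[OF B'(3) rc smult_carrier_mat[OF one_carrier_mat]]
        mult_smult_distrib[OF B'(3) one_carrier_mat])
  also have "\<dots> = b * r * binv - ?c \<cdot>\<^sub>m (b * binv)"
    using B'(3,4) rc by (simp add: minus_mult_distrib_mat[of _ n n] mult_smult_assoc_mat[OF B'(3,4)])
  also have "\<dots> = lfac n (b * r * binv) k"
    unfolding lfac_def B'(5) upper_tri_conj_diag[OF B'(1,2) r B'(5) k] ..
  finally show ?thesis ..
qed

lemma lfac_prod_conj: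
  assumes B: "Borel_pair n b binv" and r: "r \<in> upper_tri_mats n"
  shows "\<forall>k\<in>set ks. k < n \<Longrightarrow> lfac_prod n (b * r * binv) ks = b * lfac_prod n r ks * binv"
proof (induct ks)
  case Nil
  show ?case using Borel_pairD(3,5)[OF B] by simp
next
  case (Cons k ks)
  then show ?case
    using Borel_pairD[OF B]
    by (simp add: lfac_conj[OF B r] conj_mult[of _ n])
qed

lemma prod_l_conj:
  "Borel_pair n b binv \<Longrightarrow> r \<in> upper_tri_mats n \<Longrightarrow> prod_l n (b * r * binv) \<iota> = b * prod_l n r \<iota> * binv"
  unfolding prod_l_lfac_prod by (rule lfac_prod_conj) auto

lemma Lmat_conj:
  assumes B: "Borel_pair n b binv" and r: "r \<in> upper_tri_mats n"
  shows "Lmat n (b * r * binv) \<iota> = b * Lmat n r \<iota> * binv"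
proof -
  note B' = Borel_pairD[OF B]
  let ?P = "prod_l n r \<iota>" and ?c = "inverse (mtrace (prod_l n r \<iota>))"
  have "b * (?c \<cdot>\<^sub>m ?P) * binv = ?c \<cdot>\<^sub>m (b * ?P * binv)"
    by (simp add: mult_smult_distrib[OF B'(3) prod_l_carrier]
        mult_smult_assoc_mat[OF mult_carrier_mat[OF B'(3) prod_l_carrier] B'(4)])
  then show ?thesis
    unfolding Lmat_def prod_l_conj[OF B r] mtrace_conj[OF B'(3,4) prod_l_carrier B'(6)] by simp
qed

lemma mtrace_Lmat_conj:
  assumes B: "Borel_pair n b binv" and r: "r \<in> upper_tri_mats n" and s: "s \<in> carrier_mat n n"
  shows "mtrace (Lmat n (b * r * binv) \<iota> * lower_part n (b * s * binv)) = mtrace (Lmat n r \<iota> * s)"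
proof -
  note B' = Borel_pairD[OF B]
  have L: "Lmat n (b * r * binv) \<iota> \<in> upper_tri_mats n"
    using B'(1,2) r by (intro Lmat_upper_tri upper_tri_mats_mult)
  have "mtrace (Lmat n (b * r * binv) \<iota> * lower_part n (b * s * binv))
      = mtrace (Lmat n (b * r * binv) \<iota> * (b * s * binv))"
    using B'(3,4) s by (intro mtrace_mult_lower_part[OF L]) auto
  also have "\<dots> = mtrace ((b * Lmat n r \<iota> * binv) * (b * s * binv))"
    unfolding Lmat_conj[OF B r] ..
  also have "\<dots> = mtrace (b * (Lmat n r \<iota> * s) * binv)"
    by (simp add: conj_mult[OF B'(3,4,6) Lmat_carrier s])
  also have "\<dots> = mtrace (Lmat n r \<iota> * s)"
    using B'(3,4) s by (intro mtrace_conj[OF B'(3,4) _ B'(6)]) auto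
  finally show ?thesis .
qed

lemma Pmap_act:
  assumes x: "x \<in> ambient n" and B: "Borel_pair n b binv"
  shows "Pmap n (act n b binv x) = Pmap n x"
proof -
  obtain r s i j where xe: "x = (r,s,i,j)" by (cases x)
  have r: "r \<in> upper_tri_mats n" and s: "s \<in> carrier_mat n n"
    using x unfolding xe mem_ambient_iff by auto
  show ?thesis
    unfolding xe act_eq Pmap_def
    by (simp add: upper_tri_conj_diag[OF Borel_pairD(1,2)[OF B] r Borel_pairD(5)[OF B]]
        mtrace_Lmat_conj[OF B r s])
qed

lemma upper_tri_mult_Lmat:
  assumes r: "r \<in> upper_tri_mats n" and \<iota>: "\<iota> < n"
  shows "r * Lmat n r \<iota> = r $$ (\<iota>,\<iota>) \<cdot>\<^sub>m Lmat n r \<iota>"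
  unfolding Lmat_def mult_smult_distrib[OF upper_tri_matsD(1)[OF r] prod_l_carrier]
    upper_tri_mult_prod_l[OF r \<iota>]
  by (rule eq_matI) auto

text \<open>The \<open>k\<close>-th column of \<open>L\<^sup>k(r)\<close> is an \<open>r\<^sub>k\<^sub>k\<close>-eigenvector of \<open>r\<close> with \<open>k\<close>-th entry \<open>1\<close>; together
  these columns form a unitriangular eigenbasis.\<close>
definition eigenbasis :: "nat \<Rightarrow> complex mat \<Rightarrow> complex mat" where
  "eigenbasis n r = mat n n (\<lambda>(a,k). Lmat n r k $$ (a,k))"

lemma eigenbasis_carrier[simp]: "eigenbasis n r \<in> carrier_mat n n"
  and eigenbasis_dim[simp]: "dim_row (eigenbasis n r) = n" "dim_col (eigenbasis n r) = n"
  unfolding eigenbasis_def by simp_all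

lemma eigenbasis_upper_tri:
  assumes r: "r \<in> upper_tri_mats n"
  shows "eigenbasis n r \<in> upper_tri_mats n"
  using upper_tri_matsD(2)[OF Lmat_upper_tri[OF r]] by (intro upper_tri_matsI) (auto simp: eigenbasis_def)

lemma det_eigenbasis:
  assumes r: "r \<in> upper_tri_mats n" and d: "distinct_diag n r"
  shows "det (eigenbasis n r) = 1"
  unfolding det_upper_tri[OF eigenbasis_upper_tri[OF r]] using Lmat_diag[OF r d] by (simp add: eigenbasis_def)

lemma upper_tri_mult_eigenbasis:
  assumes r: "r \<in> upper_tri_mats n"
  shows "r * eigenbasis n r = eigenbasis n r * mat_diag n (\<lambda>k. r $$ (k,k))"
proof (rule eq_matI)
  let ?V = "eigenbasis n r"
  fix a k assume "a < dim_row (?V * mat_diag n (\<lambda>k. r $$ (k,k)))" "k < dim_col (?V * mat_diag n (\<lambda>k. r $$ (k,k)))"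
  then have ak: "a < n" "k < n" by auto
  have "col ?V k = col (Lmat n r k) k"
    using ak by (intro eq_vecI) (auto simp: eigenbasis_def)
  then have "(r * ?V) $$ (a,k) = (r * Lmat n r k) $$ (a,k)"
    using ak upper_tri_matsD(1)[OF r] by simp
  also have "\<dots> = ?V $$ (a,k) * r $$ (k,k)"
    using ak by (simp add: upper_tri_mult_Lmat[OF r ak(2)] eigenbasis_def)
  also have "\<dots> = (?V * mat_diag n (\<lambda>k. r $$ (k,k))) $$ (a,k)"
    using ak by (simp add: mat_diag_mult_right[OF eigenbasis_carrier])
  finally show "(r * ?V) $$ (a,k) = (?V * mat_diag n (\<lambda>k. r $$ (k,k))) $$ (a,k)" .
qed (use upper_tri_matsD(1)[OF r] in auto)


lemma upper_tri_diagonalize: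
  fixes r :: "complex mat"
  assumes r: "r \<in> upper_tri_mats n" and d: "distinct_diag n r"
  obtains W V where "Borel_pair n W V" "W * r * V = mat_diag n (\<lambda>k. r $$ (k,k))"
proof -
  let ?V = "eigenbasis n r"
  have "?V \<in> Units (ring_mat TYPE(complex) n ())"
    by (rule det_non_zero_imp_unit[OF eigenbasis_carrier]) (simp add: det_eigenbasis[OF r d])
  then obtain W where Wc: "W \<in> carrier_mat n n" and WV: "W * ?V = 1\<^sub>m n"
    unfolding Units_def ring_mat_def by auto
  have B: "Borel_pair n ?V W"
    by (rule Borel_pairI[OF eigenbasis_upper_tri[OF r] Wc mat_mult_left_right_inverse[OF Wc eigenbasis_carrier WV]])
  have "W * r * ?V = W * (r * ?V)" by (rule assoc_mult_mat[OF Wc upper_tri_matsD(1)[OF r] eigenbasis_carrier])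
  also have "\<dots> = W * ?V * mat_diag n (\<lambda>k. r $$ (k,k))"
    unfolding upper_tri_mult_eigenbasis[OF r] by (rule assoc_mult_mat[OF Wc eigenbasis_carrier mat_diag_dim, symmetric])
  finally show ?thesis using that[OF Borel_pair_sym[OF B]] unfolding WV by simp
qed


section \<open>Points with diagonal \<open>r\<close> and surjectivity\<close>

lemma distinct_diag_mat_diag:
  "distinct_diag n (mat_diag n d) \<longleftrightarrow> (\<forall>a<n. \<forall>b<n. a \<noteq> b \<longrightarrow> d a \<noteq> d b)"
  unfolding distinct_diag_def mat_diag_def by auto

lemma lfac_prod_mat_diag:
  "\<forall>k\<in>set ks. k < n \<Longrightarrow> lfac_prod n (mat_diag n d) ks = mat_diag n (\<lambda>a. \<Prod>k\<leftarrow>ks. d a - d k)"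
proof (induct ks)
  case (Cons k ks)
  have "lfac n (mat_diag n d) k = mat_diag n (\<lambda>a. d a - d k)"
    using Cons(2) by (intro eq_matI) (auto simp: lfac_index mat_diag_def)
  then show ?case using Cons by simp
qed (simp add: mat_diag_def one_mat_def)

lemma Lmat_mat_diag:
  assumes d: "distinct_diag n (mat_diag n d)" and k: "k < n"
  shows "Lmat n (mat_diag n d) k = mat_diag n (\<lambda>a. if a = k then 1 else 0)"
proof (rule eq_matI)
  fix a b assume "a < dim_row (mat_diag n (\<lambda>a. if a = k then 1 else 0 :: complex))"
    "b < dim_col (mat_diag n (\<lambda>a. if a = k then 1 else 0 :: complex))"
  then have ab: "a < n" "b < n" by auto
  have "prod_l n (mat_diag n d) k $$ (a,b) = 0" if "a \<noteq> b"
    unfolding prod_l_lfac_prod using ab that by (subst lfac_prod_mat_diag) (auto simp: mat_diag_def)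
  then show "Lmat n (mat_diag n d) k $$ (a,b) = mat_diag n (\<lambda>a. if a = k then 1 else 0) $$ (a,b)"
    using Lmat_diag[OF mat_diag_upper_tri d k ab(1)] ab by (cases "a = b") (auto simp: Lmat_def mat_diag_def)
qed auto

lemma Pmap_mat_diag:
  assumes d: "distinct_diag n (mat_diag n d)" and s: "s \<in> carrier_mat n n"
  shows "Pmap n (mat_diag n d, s, i, j) = (map d [0..<n], map (\<lambda>k. s $$ (k,k)) [0..<n])"
proof -
  have "mtrace (Lmat n (mat_diag n d) k * s) = s $$ (k,k)" if k: "k < n" for k
  proof -
    have "mtrace (Lmat n (mat_diag n d) k * s) = (\<Sum>a<n. (if a = k then 1 else 0) * s $$ (a,a))"
      using s unfolding Lmat_mat_diag[OF d k] mat_diag_mult_left[OF s] by (simp add: mtrace_def)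
    also have "\<dots> = s $$ (k,k)" by (subst sum_lessThan_single[OF k]) auto
    finally show ?thesis .
  qed
  then show ?thesis unfolding Pmap_def by (simp add: mat_diag_def)
qed

definition diag_pt :: "nat \<Rightarrow> complex list \<times> complex list \<Rightarrow> pt" where
  "diag_pt n p = (mat_diag n (\<lambda>k. fst p ! k), mat_diag n (\<lambda>k. snd p ! k), 0\<^sub>m n 1, 0\<^sub>m 1 n)"

lemma distinct_diag_target:
  "(xs, ys) \<in> target n \<Longrightarrow> distinct_diag n (mat_diag n (\<lambda>k. xs ! k))"
  unfolding distinct_diag_mat_diag target_def by (auto simp: nth_eq_iff_index_eq)

lemma diag_pt_mem_mu0_rss:
  assumes p: "p \<in> target n"
  shows "diag_pt n p \<in> mu0_rss n"
proof -
  obtain xs ys where pe: "p = (xs, ys)" by (cases p)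
  let ?X = "mat_diag n (\<lambda>k. xs ! k)" and ?Y = "mat_diag n (\<lambda>k. ys ! k)"
  have "?X * ?Y - ?Y * ?X + 0\<^sub>m n 1 * 0\<^sub>m 1 n = 0\<^sub>m n n"
    by (intro eq_matI) (auto simp: mult.commute)
  moreover have "lower_part n ?Y = ?Y"
    by (intro eq_matI) (auto simp: mat_diag_def)
  ultimately show ?thesis
    using distinct_diag_target[OF p[unfolded pe]]
    unfolding pe diag_pt_def mem_mu0_rss_iff mem_ambient_iff
    by (auto simp: mat_diag_upper_tri intro!: eq_matI)
qed

lemma Pmap_diag_pt:
  assumes p: "p \<in> target n"
  shows "Pmap n (diag_pt n p) = p"
proof -
  obtain xs ys where pe: "p = (xs, ys)" by (cases p)
  have len: "length xs = n" "length ys = n" using p unfolding pe target_def by auto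
  have "Pmap n (diag_pt n p) = (map (\<lambda>k. xs ! k) [0..<n], map (\<lambda>k. mat_diag n (\<lambda>k. ys ! k) $$ (k,k)) [0..<n])"
    unfolding pe diag_pt_def fst_conv snd_conv
    by (rule Pmap_mat_diag[OF distinct_diag_target[OF p[unfolded pe]] mat_diag_dim])
  then show ?thesis using len unfolding pe by (auto simp: mat_diag_def intro!: nth_equalityI)
qed

lemma Pmap_image: "Pmap n ` mu0_rss n = target n"
proof
  show "Pmap n ` mu0_rss n \<subseteq> target n"
  proof
    fix p assume "p \<in> Pmap n ` mu0_rss n"
    then obtain r s i j where x: "(r,s,i,j) \<in> mu0_rss n" and p: "p = Pmap n (r,s,i,j)" by auto
    have "distinct (map (\<lambda>k. r $$ (k,k)) [0..<n])"
      using x unfolding mem_mu0_rss_iff distinct_diag_def by (auto simp: distinct_conv_nth)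
    then show "p \<in> target n" unfolding p Pmap_def target_def by auto
  qed
  show "target n \<subseteq> Pmap n ` mu0_rss n"
    using Pmap_diag_pt diag_pt_mem_mu0_rss by (metis image_eqI subsetI)
qed

section \<open>Regularity\<close>

lemma poly_fun_minus: "f \<in> poly_fun n \<Longrightarrow> g \<in> poly_fun n \<Longrightarrow> (\<lambda>x. f x - g x) \<in> poly_fun n"
  using poly_fun.add[OF _ poly_fun.mult[OF poly_fun.const[of "-1"]], of f n g] by simp

lemma poly_fun_sum: "(\<And>c. c < (m :: nat) \<Longrightarrow> f c \<in> poly_fun n) \<Longrightarrow> (\<lambda>x. \<Sum>c<m. f c x) \<in> poly_fun n"
  by (induct m) (auto intro: poly_fun.const poly_fun.add)

definition poly_mat_fun :: "nat \<Rightarrow> (pt \<Rightarrow> complex mat) \<Rightarrow> bool" where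
  "poly_mat_fun n F \<longleftrightarrow> (\<forall>x. F x \<in> carrier_mat n n) \<and> (\<forall>a<n. \<forall>b<n. (\<lambda>x. F x $$ (a,b)) \<in> poly_fun n)"

lemma poly_mat_fun_mult:
  assumes F: "poly_mat_fun n F" and G: "poly_mat_fun n G"
  shows "poly_mat_fun n (\<lambda>x. F x * G x)"
  unfolding poly_mat_fun_def
proof (intro conjI allI impI)
  have Fc: "\<And>x. F x \<in> carrier_mat n n" and Gc: "\<And>x. G x \<in> carrier_mat n n"
    using F G unfolding poly_mat_fun_def by blast+
  then show "F x * G x \<in> carrier_mat n n" for x by (rule mult_carrier_mat)
  fix a b assume ab: "a < n" "b < n"
  have "(\<lambda>x. \<Sum>c<n. F x $$ (a,c) * G x $$ (c,b)) \<in> poly_fun n"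
    using F G ab unfolding poly_mat_fun_def by (intro poly_fun_sum poly_fun.mult) auto
  then show "(\<lambda>x. (F x * G x) $$ (a,b)) \<in> poly_fun n"
    by (simp only: index_mult_mat_sum[OF Fc Gc ab])
qed

lemma poly_mat_fun_lfac_prod:
  assumes F: "poly_mat_fun n F"
  shows "\<forall>k\<in>set ks. k < n \<Longrightarrow> poly_mat_fun n (\<lambda>x. lfac_prod n (F x) ks)"
proof (induct ks)
  case Nil
  show ?case unfolding poly_mat_fun_def by (auto intro: poly_fun.const)
next
  case (Cons k ks)
  have Fc: "\<And>x. F x \<in> carrier_mat n n"
    and Fp: "\<And>a b. a < n \<Longrightarrow> b < n \<Longrightarrow> (\<lambda>x. F x $$ (a,b)) \<in> poly_fun n"
    using F unfolding poly_mat_fun_def by blast+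
  have "(\<lambda>x. lfac n (F x) k $$ (a,b)) \<in> poly_fun n" if ab: "a < n" "b < n" for a b
    using Cons(2) ab Fp[OF ab] Fp[of k k]
    by (cases "a = b") (simp_all add: lfac_index[OF Fc] poly_fun_minus)
  then have "poly_mat_fun n (\<lambda>x. lfac n (F x) k)" unfolding poly_mat_fun_def by simp
  then show ?case using Cons by (simp add: poly_mat_fun_mult)
qed

lemma mtrace_poly_fun:
  assumes "poly_mat_fun n F"
  shows "(\<lambda>x. mtrace (F x)) \<in> poly_fun n"
proof -
  have "mtrace (F x) = (\<Sum>a<n. F x $$ (a,a))" for x
    using assms unfolding poly_mat_fun_def by (blast intro: mtrace_eq_sum)
  then show ?thesis using assms unfolding poly_mat_fun_def by (simp add: poly_fun_sum)
qed

text \<open>Cut to \<open>n \<times> n\<close>, so that they are \<open>n \<times> n\<close> matrices at every point of \<open>pt\<close>, not only on \<open>ambient n\<close>.\<close>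
definition r_part :: "nat \<Rightarrow> pt \<Rightarrow> complex mat" where
  "r_part n x = mat n n (\<lambda>ab. fst x $$ ab)"

definition s_part :: "nat \<Rightarrow> pt \<Rightarrow> complex mat" where
  "s_part n x = mat n n (\<lambda>ab. fst (snd x) $$ ab)"

lemma poly_mat_fun_r_part: "poly_mat_fun n (r_part n)"
  unfolding poly_mat_fun_def
proof (intro conjI allI impI)
  show "r_part n x \<in> carrier_mat n n" for x unfolding r_part_def by simp
  fix a b assume ab: "a < n" "b < n"
  then have "(\<lambda>x. r_part n x $$ (a,b)) = (\<lambda>(r,s,i,j). r $$ (a,b))" by (auto simp: r_part_def)
  then show "(\<lambda>x. r_part n x $$ (a,b)) \<in> poly_fun n" using ab by (simp add: poly_fun.coord_r)
qed

lemma poly_mat_fun_s_part: "poly_mat_fun n (s_part n)"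
  unfolding poly_mat_fun_def
proof (intro conjI allI impI)
  show "s_part n x \<in> carrier_mat n n" for x unfolding s_part_def by simp
  fix a b assume ab: "a < n" "b < n"
  then have "(\<lambda>x. s_part n x $$ (a,b)) = (\<lambda>(r,s,i,j). s $$ (a,b))" by (auto simp: s_part_def)
  then show "(\<lambda>x. s_part n x $$ (a,b)) \<in> poly_fun n" using ab by (simp add: poly_fun.coord_s)
qed

lemma regular_on_Pmap:
  assumes k: "k < n"
  shows "regular_on n (mu0_rss n) (\<lambda>x. fst (Pmap n x) ! k)"
    "regular_on n (mu0_rss n) (\<lambda>x. snd (Pmap n x) ! k)"
proof -
  have "\<forall>x\<in>mu0_rss n. (\<lambda>_. 1 :: complex) x \<noteq> 0
      \<and> fst (Pmap n x) ! k = (\<lambda>(r,s,i,j). r $$ (k,k)) x / (\<lambda>_. 1) x"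
    using k by (auto simp: Pmap_def)
  then show "regular_on n (mu0_rss n) (\<lambda>x. fst (Pmap n x) ! k)"
    unfolding regular_on_def by (rule bexI[OF bexI[OF _ poly_fun.const] poly_fun.coord_r[OF k k]])
  let ?p = "\<lambda>x. mtrace (prod_l n (r_part n x) k * s_part n x)"
  let ?q = "\<lambda>x. mtrace (prod_l n (r_part n x) k)"
  have prod: "poly_mat_fun n (\<lambda>x. prod_l n (r_part n x) k)"
    unfolding prod_l_lfac_prod by (intro poly_mat_fun_lfac_prod poly_mat_fun_r_part) auto
  have p: "?p \<in> poly_fun n" by (intro mtrace_poly_fun poly_mat_fun_mult prod poly_mat_fun_s_part)
  have q: "?q \<in> poly_fun n" by (intro mtrace_poly_fun prod)
  have "?q x \<noteq> 0 \<and> snd (Pmap n x) ! k = ?p x / ?q x" if x: "x \<in> mu0_rss n" for x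
  proof -
    obtain r s i j where xe: "x = (r,s,i,j)" by (cases x)
    have r: "r \<in> upper_tri_mats n" and s: "s \<in> carrier_mat n n" and d: "distinct_diag n r"
      using x unfolding xe mem_mu0_rss_iff mem_ambient_iff by auto
    have "r_part n x = r" "s_part n x = s"
      using upper_tri_matsD(1)[OF r] s unfolding xe r_part_def s_part_def by (auto intro!: eq_matI)
    moreover have "snd (Pmap n x) ! k = mtrace (Lmat n r k * s)" using k unfolding xe Pmap_def by simp
    ultimately show ?thesis
      using mtrace_prod_l(2)[OF r d k] mtrace_Lmat_mult[OF s] by simp
  qed
  then show "regular_on n (mu0_rss n) (\<lambda>x. snd (Pmap n x) ! k)"
    unfolding regular_on_def by (intro bexI[OF bexI[OF _ q] p] ballI)
qed

section \<open>Orbit closures\<close>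

lemma poly_fun_isCont:
  fixes \<gamma> :: "complex \<Rightarrow> pt"
  assumes p: "p \<in> poly_fun n"
    and R: "\<And>a b. a < n \<Longrightarrow> b < n \<Longrightarrow> isCont (\<lambda>t. fst (\<gamma> t) $$ (a,b)) t0"
    and S: "\<And>a b. a < n \<Longrightarrow> b < n \<Longrightarrow> isCont (\<lambda>t. fst (snd (\<gamma> t)) $$ (a,b)) t0"
    and I: "\<And>a. a < n \<Longrightarrow> isCont (\<lambda>t. fst (snd (snd (\<gamma> t))) $$ (a,0)) t0"
    and J: "\<And>b. b < n \<Longrightarrow> isCont (\<lambda>t. snd (snd (snd (\<gamma> t))) $$ (0,b)) t0"
  shows "isCont (\<lambda>t. p (\<gamma> t)) t0"
  using p by induct (auto simp: case_prod_beta R S I J)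

lemma zclosure_in_curve_limit:
  fixes \<gamma> :: "complex \<Rightarrow> pt"
  assumes "\<gamma> 0 \<in> X" and S: "\<And>t. t \<noteq> 0 \<Longrightarrow> \<gamma> t \<in> S"
    and cont: "\<And>p. p \<in> poly_fun n \<Longrightarrow> isCont (\<lambda>t. p (\<gamma> t)) 0"
  shows "\<gamma> 0 \<in> zclosure_in n X S"
  unfolding zclosure_in_def
proof (intro CollectI conjI ballI impI)
  fix p assume p: "p \<in> poly_fun n" and vanish: "\<forall>y\<in>S. p y = 0"
  have "((\<lambda>t. p (\<gamma> t)) \<longlongrightarrow> p (\<gamma> 0)) (at 0)" using cont[OF p] isCont_def by blast
  moreover have "((\<lambda>t. p (\<gamma> t)) \<longlongrightarrow> 0) (at 0)"
    using S vanish by (intro tendsto_eventually) (auto simp: eventually_at intro: exI[of _ 1])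
  ultimately show "p (\<gamma> 0) = 0" using tendsto_unique[OF at_neq_bot] by blast
qed (fact assms)

lemma mu0_rss_mat_diag_index:
  assumes y: "(mat_diag n d, s, i, j) \<in> mu0_rss n" and ab: "a < n" "b \<le> a"
  shows "(d a - d b) * s $$ (a,b) + i $$ (a,0) * j $$ (0,b) = 0"
proof -
  let ?D = "mat_diag n d"
  have s: "s \<in> carrier_mat n n" and i: "i \<in> carrier_mat n 1" and j: "j \<in> carrier_mat 1 n"
    and m: "lower_part n (?D * s - s * ?D + i * j) = 0\<^sub>m n n"
    using y unfolding mem_mu0_rss_iff mem_ambient_iff by auto
  have ij: "(i * j) $$ (a,b) = i $$ (a,0) * j $$ (0,b)"
    using ab by (simp del: index_mult_mat add: index_mult_mat_sum[OF i j])
  have "0 = lower_part n (?D * s - s * ?D + i * j) $$ (a,b)" using m ab by simp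
  also have "\<dots> = d a * s $$ (a,b) - s $$ (a,b) * d b + i $$ (a,0) * j $$ (0,b)"
    using ab s carrier_matD[OF i] carrier_matD[OF j]
    by (simp add: mat_diag_mult_left[OF s] mat_diag_mult_right[OF s] ij)
  finally show ?thesis by (simp add: algebra_simps)
qed

lemma mu0_rss_mat_diag_support:
  assumes y: "(mat_diag n d, s, i, j) \<in> mu0_rss n"
  shows "\<And>a. a < n \<Longrightarrow> i $$ (a,0) * j $$ (0,a) = 0"
    "\<And>a b. a < n \<Longrightarrow> b < a \<Longrightarrow> s $$ (a,b) \<noteq> 0 \<Longrightarrow> i $$ (a,0) \<noteq> 0 \<and> j $$ (0,b) \<noteq> 0"
proof -
  have d: "distinct_diag n (mat_diag n d)" using y unfolding mem_mu0_rss_iff by auto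
  show "\<And>a. a < n \<Longrightarrow> i $$ (a,0) * j $$ (0,a) = 0"
    using mu0_rss_mat_diag_index[OF y] by fastforce
  fix a b assume ab: "a < n" "b < a" and sab: "s $$ (a,b) \<noteq> 0"
  have "d a \<noteq> d b" using d ab unfolding distinct_diag_mat_diag by auto
  then have "(d a - d b) * s $$ (a,b) \<noteq> 0" using sab by simp
  moreover have "(d a - d b) * s $$ (a,b) + i $$ (a,0) * j $$ (0,b) = 0"
    using mu0_rss_mat_diag_index[OF y ab(1)] ab by simp
  ultimately have "i $$ (a,0) * j $$ (0,b) \<noteq> 0" by (metis add.right_neutral)
  then show "i $$ (a,0) \<noteq> 0 \<and> j $$ (0,b) \<noteq> 0" by auto
qed

definition torus_weight :: "complex mat \<Rightarrow> complex \<Rightarrow> nat \<Rightarrow> complex" where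
  "torus_weight i t a = (if i $$ (a,0) \<noteq> 0 then t else inverse t)"

text \<open>For \<open>t \<noteq> 0\<close> this is the action of \<open>diag (torus_weight i t)\<close> (\<open>torus_curve_act\<close>); at \<open>t = 0\<close>
  it reaches the point with the same diagonals and \<open>i = j = 0\<close>.\<close>
definition torus_curve :: "nat \<Rightarrow> pt \<Rightarrow> complex \<Rightarrow> pt" where
  "torus_curve n x t = (case x of (r,s,i,j) \<Rightarrow>
     (r, mat n n (\<lambda>(a,b). if a = b then s $$ (a,a) else t\<^sup>2 * s $$ (a,b)), t \<cdot>\<^sub>m i, t \<cdot>\<^sub>m j))"

text \<open>A nonzero entry \<open>s\<^sub>a\<^sub>b\<close> below the diagonal forces \<open>i\<^sub>a \<noteq> 0\<close> and \<open>j\<^sub>b \<noteq> 0\<close>, hence \<open>i\<^sub>b = 0\<close>, so it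
  is scaled by \<open>t \<cdot> t\<close>.\<close>
lemma lower_part_torus_conj:
  assumes y: "(mat_diag n d, s, i, j) \<in> mu0_rss n" and t: "t \<noteq> 0"
  shows "lower_part n (mat_diag n (torus_weight i t) * s * mat_diag n (\<lambda>a. inverse (torus_weight i t a)))
    = mat n n (\<lambda>(a,b). if a = b then s $$ (a,a) else t\<^sup>2 * s $$ (a,b))"
proof (rule eq_matI)
  have s: "s \<in> carrier_mat n n" and sl: "lower_part n s = s"
    using y unfolding mem_mu0_rss_iff mem_ambient_iff by auto
  note supp = mu0_rss_mat_diag_support[OF y]
  let ?f = "torus_weight i t"
  fix a b assume "a < dim_row (mat n n (\<lambda>(a,b). if a = b then s $$ (a,a) else t\<^sup>2 * s $$ (a,b)))"
    "b < dim_col (mat n n (\<lambda>(a,b). if a = b then s $$ (a,a) else t\<^sup>2 * s $$ (a,b)))"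
  then have ab: "a < n" "b < n" by auto
  have e: "(mat_diag n ?f * s * mat_diag n (\<lambda>a. inverse (?f a))) $$ (a,b) = ?f a * s $$ (a,b) * inverse (?f b)"
    using ab s by (simp add: mat_diag_mult_left[OF s] mat_diag_mult_right[of _ n n])
  have f: "?f a \<noteq> 0" for a using t unfolding torus_weight_def by auto
  consider "b > a" | "b = a" | "b < a" "s $$ (a,b) = 0" | "b < a" "s $$ (a,b) \<noteq> 0" by fastforce
  then show "lower_part n (mat_diag n ?f * s * mat_diag n (\<lambda>a. inverse (?f a))) $$ (a,b)
    = mat n n (\<lambda>(a,b). if a = b then s $$ (a,a) else t\<^sup>2 * s $$ (a,b)) $$ (a,b)"
  proof cases
    case 1
    then show ?thesis using ab sl lower_part_index[of a n b s] by auto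
  next
    case 4
    then have "?f a = t" "?f b = inverse t"
      using supp(1)[OF ab(2)] supp(2)[OF ab(1) 4] unfolding torus_weight_def by auto
    then show ?thesis using 4 ab e by (simp add: power2_eq_square)
  qed (use ab e f in auto)
qed auto

lemma torus_curve_act:
  assumes y: "(mat_diag n d, s, i, j) \<in> mu0_rss n" and t: "t \<noteq> 0"
  shows "torus_curve n (mat_diag n d, s, i, j) t
    = act n (mat_diag n (torus_weight i t)) (mat_diag n (\<lambda>a. inverse (torus_weight i t a))) (mat_diag n d, s, i, j)"
proof -
  have i: "i \<in> carrier_mat n 1" and j: "j \<in> carrier_mat 1 n"
    using y unfolding mem_mu0_rss_iff mem_ambient_iff by auto
  note supp = mu0_rss_mat_diag_support[OF y]
  let ?f = "torus_weight i t"
  have f: "?f a \<noteq> 0" for a using t unfolding torus_weight_def by auto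
  have "mat_diag n ?f * mat_diag n d * mat_diag n (\<lambda>a. inverse (?f a)) = mat_diag n (\<lambda>a. ?f a * d a * inverse (?f a))"
    by simp
  also have "\<dots> = mat_diag n d" using f by (simp add: field_simps)
  finally have r: "mat_diag n ?f * mat_diag n d * mat_diag n (\<lambda>a. inverse (?f a)) = mat_diag n d" .
  have i': "mat_diag n ?f * i = t \<cdot>\<^sub>m i"
    using i by (intro eq_matI) (auto simp: mat_diag_mult_left[OF i] torus_weight_def)
  have "j $$ (0,b) * inverse (?f b) = t * j $$ (0,b)" if "b < n" for b
    using supp(1)[OF that] by (cases "j $$ (0,b) = 0") (auto simp: torus_weight_def)
  then have j': "j * mat_diag n (\<lambda>a. inverse (?f a)) = t \<cdot>\<^sub>m j"
    using j by (intro eq_matI) (auto simp: mat_diag_mult_right[OF j])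
  show ?thesis unfolding act_eq torus_curve_def r lower_part_torus_conj[OF y t] i' j' by simp
qed

lemma torus_curve_mem_orbit:
  assumes y: "(mat_diag n d, s, i, j) \<in> mu0_rss n" and t: "t \<noteq> 0"
  shows "torus_curve n (mat_diag n d, s, i, j) t \<in> orbit n (mat_diag n d, s, i, j)"
proof -
  have "Borel_pair n (mat_diag n (torus_weight i t)) (mat_diag n (\<lambda>a. inverse (torus_weight i t a)))"
    using t by (intro mat_diag_Borel_pair) (auto simp: torus_weight_def)
  then show ?thesis unfolding orbit_Borel_pair torus_curve_act[OF y t] by blast
qed

lemma torus_curve_0:
  assumes y: "(mat_diag n d, s, i, j) \<in> mu0_rss n"
  shows "torus_curve n (mat_diag n d, s, i, j) 0 = diag_pt n (Pmap n (mat_diag n d, s, i, j))"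
proof -
  have s: "s \<in> carrier_mat n n" and i: "i \<in> carrier_mat n 1" and j: "j \<in> carrier_mat 1 n"
    and d: "distinct_diag n (mat_diag n d)"
    using y unfolding mem_mu0_rss_iff mem_ambient_iff by auto
  show ?thesis
    unfolding torus_curve_def diag_pt_def Pmap_mat_diag[OF d s] using s i j
    by (auto intro!: eq_matI simp: mat_diag_def)
qed

lemma isCont_poly_fun_torus_curve:
  assumes y: "y \<in> ambient n" and p: "p \<in> poly_fun n"
  shows "isCont (\<lambda>t. p (torus_curve n y t)) t0"
proof -
  obtain r s i j where ye: "y = (r,s,i,j)" by (cases y)
  have "isCont (\<lambda>t. if a = b then s $$ (a,a) else t\<^sup>2 * s $$ (a,b)) t0" for a b
    by (cases "a = b") (auto intro!: continuous_intros)
  then show ?thesis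
    using y unfolding ye mem_ambient_iff
    by (intro poly_fun_isCont[OF p]) (auto simp: torus_curve_def intro!: continuous_intros)
qed

lemma diag_pt_mem_zclosure_orbit:
  assumes x: "x \<in> mu0_rss n"
  shows "diag_pt n (Pmap n x) \<in> zclosure_in n (mu0_rss n) (orbit n x)"
proof -
  obtain r s i j where xe: "x = (r,s,i,j)" by (cases x)
  have amb: "x \<in> ambient n" and r: "r \<in> upper_tri_mats n" and d: "distinct_diag n r"
    using x unfolding xe mem_mu0_rss_iff mem_ambient_iff by auto
  obtain W V where B: "Borel_pair n W V" and WrV: "W * r * V = mat_diag n (\<lambda>k. r $$ (k,k))"
    using upper_tri_diagonalize[OF r d] .
  define y where "y = act n W V x"
  obtain s' i' j' where ye: "y = (mat_diag n (\<lambda>k. r $$ (k,k)), s', i', j')"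
    unfolding y_def xe act_eq WrV by blast
  have y_mem: "y \<in> mu0_rss n" unfolding y_def by (rule act_mem_mu0_rss[OF x B])
  have y_orb: "y \<in> orbit n x" unfolding y_def orbit_Borel_pair using B by blast
  have P: "Pmap n y = Pmap n x" unfolding y_def by (rule Pmap_act[OF amb B])
  let ?\<gamma> = "torus_curve n y"
  have "?\<gamma> 0 \<in> zclosure_in n (mu0_rss n) (orbit n x)"
  proof (rule zclosure_in_curve_limit)
    show "?\<gamma> 0 \<in> mu0_rss n"
      using y_mem Pmap_image P x unfolding ye torus_curve_0[OF y_mem[unfolded ye]]
      by (metis diag_pt_mem_mu0_rss image_eqI)
    show "?\<gamma> t \<in> orbit n x" if "t \<noteq> 0" for t
      using orbit_trans[OF amb y_orb] torus_curve_mem_orbit[OF y_mem[unfolded ye] that] unfolding ye .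
    show "isCont (\<lambda>t. p (?\<gamma> t)) 0" if "p \<in> poly_fun n" for p
      using y_mem that unfolding mu0_rss_def by (intro isCont_poly_fun_torus_curve) auto
  qed
  then show ?thesis unfolding ye torus_curve_0[OF y_mem[unfolded ye]] P[unfolded ye] .
qed

theorem mainTheorem12:
  fixes n :: nat
  shows "(\<forall>x\<in>mu0_rss n. \<forall>\<iota><n. mtrace (prod_l n (fst x) \<iota>) \<noteq> 0)
    \<and> (\<forall>k<n. regular_on n (mu0_rss n) (\<lambda>x. fst (Pmap n x) ! k)
            \<and> regular_on n (mu0_rss n) (\<lambda>x. snd (Pmap n x) ! k))
    \<and> (\<forall>x\<in>mu0_rss n. \<forall>b binv. b \<in> Borel n \<and> binv \<in> carrier_mat n n \<and> b * binv = 1\<^sub>m n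
          \<longrightarrow> Pmap n (act n b binv x) = Pmap n x)
    \<and> Pmap n ` mu0_rss n = target n
    \<and> (\<forall>x\<in>mu0_rss n. \<forall>y\<in>mu0_rss n.
          zclosure_in n (mu0_rss n) (orbit n x) \<inter> zclosure_in n (mu0_rss n) (orbit n y) = {}
          \<longrightarrow> Pmap n x \<noteq> Pmap n y)"
proof (intro conjI ballI allI impI)
  fix x \<iota> assume "x \<in> mu0_rss n" "\<iota> < n"
  then show "mtrace (prod_l n (fst x) \<iota>) \<noteq> 0"
    by (cases x) (simp add: mem_mu0_rss_iff mem_ambient_iff mtrace_prod_l(2))
next
  fix k assume "k < n"
  then show "regular_on n (mu0_rss n) (\<lambda>x. fst (Pmap n x) ! k)"
    "regular_on n (mu0_rss n) (\<lambda>x. snd (Pmap n x) ! k)"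
    by (rule regular_on_Pmap)+
next
  fix x b binv assume "x \<in> mu0_rss n" "b \<in> Borel n \<and> binv \<in> carrier_mat n n \<and> b * binv = 1\<^sub>m n"
  then show "Pmap n (act n b binv x) = Pmap n x"
    unfolding Borel_pair_iff mu0_rss_def by (auto intro: Pmap_act)
next
  show "Pmap n ` mu0_rss n = target n" by (rule Pmap_image)
next
  fix x y assume "x \<in> mu0_rss n" "y \<in> mu0_rss n"
    and "zclosure_in n (mu0_rss n) (orbit n x) \<inter> zclosure_in n (mu0_rss n) (orbit n y) = {}"
  then show "Pmap n x \<noteq> Pmap n y" using diag_pt_mem_zclosure_orbit by fastforce
qed

end
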